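(* Let $n$ be a positive odd integer. Then $$ \sum_{k=0}^{n-1}\frac{(aq;q^2)_k\,(q/a;q^2)_k}{(q^2;q^2)_k^2} \equiv (-1)^{(n-1)/2}q^{(1-n^2)/4}\pmod{(1-aq^n)(a-q^n)}. $$
   Context: $a,q$ are indeterminates. The $q$-shifted factorial is $(y;q)_0=1$ and $(y;q)_m=(1-y)(1-yq)\cdots(1-yq^{m-1})$ for $m\geqslant1$. For rational functions $A,B$ and a polynomial $P$, $A\equiv B\pmod P$ means $A-B=P\cdot C/D$ for polynomials $C,D$ with $D$ coprime to $P$. *)

theory Defs
  imports "HOL-Computational_Algebra.Computational_Algebra"
begin

text \<open>Bivariate polynomials over the rationals in the indeterminates a (inner variable)
and q (outer variable), and rational functions as their fraction field.\<close>

type_synonym bipoly = "rat poly poly"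
type_synonym ratfun = "rat poly poly fract"

definition A_pol :: bipoly where "A_pol = [:[:0, 1:]:]"
definition Q_pol :: bipoly where "Q_pol = [:0, 1:]"

definition a_var :: ratfun where "a_var = to_fract A_pol"
definition q_var :: ratfun where "q_var = to_fract Q_pol"

definition qpoch :: "ratfun \<Rightarrow> ratfun \<Rightarrow> nat \<Rightarrow> ratfun" where
  "qpoch y p m = (\<Prod>j<m. 1 - y * p ^ j)"

definition rf_cong :: "ratfun \<Rightarrow> ratfun \<Rightarrow> bipoly \<Rightarrow> bool" where
  "rf_cong A B P \<longleftrightarrow> (\<exists>C D :: bipoly. D \<noteq> 0 \<and> coprime D P \<and>
      A - B = to_fract P * to_fract C / to_fract D)"

end

theory Submission
  imports Defs "HOL-Computational_Algebra.Field_as_Ring"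
begin

(*
  Modulo (1 - a q^n)(a - q^n) the variable a may be replaced by q^n in every factor
  (1 - a x)(1 - x/a) of the numerator: that factor is symmetric under a <-> 1/a, and its
  difference to (1 - x q^-n)(1 - x q^n) is the modulus times x/(a q^n).  With p = q^2 and
  n = 2m + 1 the sum becomes the terminating q-Chu-Vandermonde sum
    sum_k (p^-m;p)_k (p^(m+1);p)_k / (p;p)_k^2 = (-1)^m p^(-m(m+1)/2),
  evaluated by a telescoping certificate that relates the sums at p^m and p^(m+1).
  Every denominator met on the way is coprime to the modulus; for polynomials in q alone this
  is seen after exchanging the two variables.
*)

section \<open>A terminating q-Chu--Vandermonde sum\<close>

definition qpochhammer :: "'a::field \<Rightarrow> 'a \<Rightarrow> nat \<Rightarrow> 'a" where
  "qpochhammer y p k = (\<Prod>j<k. 1 - y * p ^ j)"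

lemma qpochhammer_Suc: "qpochhammer y p (Suc k) = qpochhammer y p k * (1 - y * p ^ k)"
  by (simp add: qpochhammer_def)

lemma qpochhammer_Suc_shift: "qpochhammer y p (Suc k) = (1 - y) * qpochhammer (y * p) p k"
  by (simp add: qpochhammer_def prod.lessThan_Suc_shift mult.assoc del: prod.lessThan_Suc)

lemma qpochhammer_eq_0:
  assumes "p \<noteq> 0" "m < k"
  shows "qpochhammer (inverse (p ^ m)) p k = 0"
  using assms by (auto simp: qpochhammer_def intro!: bexI[of _ m])

lemma qpochhammer_self_nonzero:
  assumes "\<And>i. p ^ Suc i \<noteq> 1"
  shows "qpochhammer p p k \<noteq> 0"
  using assms by (simp add: qpochhammer_def)

definition chu_term :: "'a::field \<Rightarrow> 'a \<Rightarrow> nat \<Rightarrow> 'a" where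
  "chu_term p w k = qpochhammer (inverse w) p k * qpochhammer (p * w) p k / qpochhammer p p k ^ 2"

(* WZ-style certificate: its increments telescope the sums at w and p w. *)
definition chu_certificate :: "'a::field \<Rightarrow> 'a \<Rightarrow> nat \<Rightarrow> 'a" where
  "chu_certificate p w k = (p * w + 1) / (1 - p * w)
     * qpochhammer (inverse w) p k * qpochhammer (p * w) p (Suc k) / (qpochhammer p p k ^ 2 * (p * w))"

lemma chu_certificate_step:
  fixes p w :: "'a::field"
  assumes "p \<noteq> 0" "w \<noteq> 0" "p * w \<noteq> 1" "\<And>i. p ^ Suc i \<noteq> 1"
  shows "chu_certificate p w (Suc k) - chu_certificate p w k
     = chu_term p (p * w) (Suc k) + chu_term p w (Suc k) / (p * w)"
proof -
  define Z W D t v e where "Z = qpochhammer (inverse w) p k" and "W = qpochhammer (p * w) p (Suc k)"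
    and "D = qpochhammer p p k" and "t = p ^ k" and "v = 1 - p * t" and "e = 1 - p * w"
  have nz: "D \<noteq> 0" "v \<noteq> 0" "e \<noteq> 0"
    using qpochhammer_self_nonzero[OF assms(4)] assms(3) assms(4)[of k]
    by (auto simp: D_def t_def v_def e_def)
  have Z': "qpochhammer (inverse (p * w)) p (Suc k) = (1 - inverse (p * w)) * Z"
    using assms(1) by (simp add: qpochhammer_Suc_shift Z_def field_simps)
  have W': "qpochhammer (p * (p * w)) p (Suc k) = W * (1 - p * w * (p * t)) / e"
    using qpochhammer_Suc_shift[of "p * w" p "Suc k"] nz
    by (simp add: qpochhammer_Suc[of _ _ "Suc k"] W_def t_def e_def field_simps)
  have term_pw: "chu_term p (p * w) (Suc k)
      = (1 - inverse (p * w)) * Z * (W * (1 - p * w * (p * t)) / e) / (D * v) ^ 2"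
    unfolding chu_term_def Z' W' by (simp add: qpochhammer_Suc D_def t_def v_def)
  have term_w: "chu_term p w (Suc k) = Z * (1 - inverse w * t) * W / (D * v) ^ 2"
    unfolding chu_term_def by (simp add: qpochhammer_Suc D_def t_def Z_def W_def v_def)
  have cert_Suc: "chu_certificate p w (Suc k) = (p * w + 1) / e * (Z * (1 - inverse w * t))
     * (W * (1 - p * w * (p * t))) / ((D * v) ^ 2 * (p * w))"
    unfolding chu_certificate_def
    by (simp add: qpochhammer_Suc[of _ _ "Suc k"] qpochhammer_Suc[of _ _ k]
        D_def t_def Z_def W_def v_def e_def)
  have cert: "chu_certificate p w k = (p * w + 1) / e * Z * W / (D ^ 2 * (p * w))"
    unfolding chu_certificate_def by (simp add: D_def Z_def W_def e_def)
  show ?thesis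
    unfolding term_pw term_w cert_Suc cert using nz assms(1,2)
    by (simp add: field_simps power2_eq_square) (simp add: v_def e_def algebra_simps)
qed

lemma chu_term_0 [simp]: "chu_term p w 0 = 1"
  by (simp add: chu_term_def qpochhammer_def)

lemma chu_term_eq_0: "p \<noteq> 0 \<Longrightarrow> m < k \<Longrightarrow> chu_term p (p ^ m) k = 0"
  by (simp add: chu_term_def qpochhammer_eq_0)

lemma sum_chu_term_truncate:
  assumes "p \<noteq> 0" "m < n"
  shows "(\<Sum>k<n. chu_term p (p ^ m) k) = (\<Sum>k<Suc m. chu_term p (p ^ m) k)"
  using assms chu_term_eq_0[OF assms(1)] by (intro sum.mono_neutral_right) auto

lemma sum_chu_term_telescope:
  fixes p w :: "'a::field"
  assumes "p \<noteq> 0" "w \<noteq> 0" "p * w \<noteq> 1" "\<And>i. p ^ Suc i \<noteq> 1"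
  shows "(\<Sum>i<Suc k. chu_term p (p * w) i + chu_term p w i / (p * w)) = chu_certificate p w k"
proof (induction k)
  case 0
  show ?case
    using assms(1-3) by (simp add: chu_certificate_def qpochhammer_def field_simps)
next
  case (Suc k)
  then show ?case
    using chu_certificate_step[OF assms, of k] by (simp add: algebra_simps)
qed

lemma sum_chu_term_closed_form:
  fixes p :: "'a::field"
  assumes "p \<noteq> 0" "\<And>i. p ^ Suc i \<noteq> 1" "m < n"
  shows "(\<Sum>k<n. chu_term p (p ^ m) k) = (-1) ^ m / p ^ (m * (m + 1) div 2)"
  using assms(3)
proof (induction m arbitrary: n)
  case 0
  then show ?case
    using sum_chu_term_truncate[OF assms(1) 0] by simp
next
  case (Suc m)
  have "chu_certificate p (p ^ m) (Suc m) = 0"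
    using qpochhammer_eq_0[OF assms(1), of m "Suc m"] by (simp add: chu_certificate_def)
  then have "(\<Sum>k<Suc (Suc m). chu_term p (p ^ Suc m) k)
      = - ((\<Sum>k<Suc (Suc m). chu_term p (p ^ m) k) / p ^ Suc m)"
    using sum_chu_term_telescope[OF assms(1) _ _ assms(2), of "p ^ m" "Suc m"] assms(1,2)
    by (simp add: sum.distrib flip: sum_divide_distrib eq_neg_iff_add_eq_0)
  also have "\<dots> = - ((-1) ^ m / p ^ (m * (m + 1) div 2)) / p ^ Suc m"
    using Suc.IH[of "Suc (Suc m)"] by simp
  also have "\<dots> = (-1) ^ Suc m / p ^ (Suc m * (Suc m + 1) div 2)"
  proof -
    have "Suc m * (Suc m + 1) div 2 = m * (m + 1) div 2 + Suc m"
      by (induction m) auto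
    then show ?thesis by (simp add: power_add)
  qed
  finally show ?case
    using sum_chu_term_truncate[OF assms(1) Suc.prems] by simp
qed

section \<open>Exchanging the two variables\<close>

lemma map_poly_mult_hom:
  fixes h :: "'a::comm_semiring_1 \<Rightarrow> 'b::comm_semiring_1"
  assumes "h 0 = 0" "\<And>x y. h (x + y) = h x + h y" "\<And>x y. h (x * y) = h x * h y"
  shows "map_poly h (p * q) = map_poly h p * map_poly h q"
  by (intro poly_eqI)
    (simp add: coeff_map_poly coeff_mult assms(1,3)
      flip: sum_comp_morphism[of h, OF assms(1,2), unfolded o_def])

lemma map_poly_add_hom:
  assumes "h 0 = 0" "\<And>x y. h (x + y) = h x + h y"
  shows "map_poly h (p + q) = map_poly h p + map_poly h q"
  by (intro poly_eqI) (simp add: coeff_map_poly assms)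

(* Exchanges the inner and the outer variable of a bivariate polynomial. *)
definition poly_swap :: "'a::comm_ring_1 poly poly \<Rightarrow> 'a poly poly" where
  "poly_swap f = poly (map_poly (map_poly (\<lambda>x. [:x:])) f) [:[:0, 1:]:]"

lemma map_poly_const_add:
  "map_poly (\<lambda>x. [:x:]) (p + q) = map_poly (\<lambda>x. [:x:]) p + map_poly (\<lambda>x. [:x:]) q"
  by (rule map_poly_add_hom) auto

lemma map_poly_const_mult:
  fixes p q :: "'a::comm_semiring_1 poly"
  shows "map_poly (\<lambda>x. [:x:]) (p * q) = map_poly (\<lambda>x. [:x:]) p * map_poly (\<lambda>x. [:x:]) q"
  by (rule map_poly_mult_hom) (simp_all add: mult.commute)

lemma poly_swap_0 [simp]: "poly_swap 0 = 0"
  and poly_swap_1 [simp]: "poly_swap 1 = 1"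
  by (simp_all add: poly_swap_def)

lemma poly_swap_add: "poly_swap (f + g) = poly_swap f + poly_swap g"
  unfolding poly_swap_def by (subst map_poly_add_hom) (auto simp: map_poly_const_add)

lemma poly_swap_mult: "poly_swap (f * g) = poly_swap f * poly_swap g"
  unfolding poly_swap_def
  by (subst map_poly_mult_hom) (auto simp: map_poly_const_add map_poly_const_mult)

lemma poly_swap_diff: "poly_swap (f - g) = poly_swap f - poly_swap g"
  using poly_swap_add[of "f - g" g] by (simp add: algebra_simps)

lemma poly_swap_power: "poly_swap (f ^ n) = poly_swap f ^ n"
  by (induction n) (simp_all add: poly_swap_mult)

lemma poly_swap_pCons: "poly_swap (pCons c f) = map_poly (\<lambda>x. [:x:]) c + [:[:0, 1:]:] * poly_swap f"
  by (simp add: poly_swap_def map_poly_pCons)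

lemma poly_swap_const_coeffs: "poly_swap (map_poly (\<lambda>x. [:x:]) c) = [:c:]"
proof (induction c)
  case (pCons x c)
  then show ?case
    by (simp add: map_poly_pCons poly_swap_pCons)
qed simp

lemma poly_swap_inner_var [simp]: "poly_swap [:[:0, 1:]:] = [:0, 1:]"
  and poly_swap_outer_var [simp]: "poly_swap [:0, 1:] = [:[:0, 1:]:]"
  by (simp_all add: poly_swap_def map_poly_pCons)

lemma poly_swap_poly_swap [simp]: "poly_swap (poly_swap f) = f"
proof (induction f)
  case (pCons c f)
  have "poly_swap (poly_swap (pCons c f)) = [:c:] + poly_swap [:[:0, 1:]:] * f"
    by (simp only: poly_swap_pCons poly_swap_add poly_swap_mult poly_swap_const_coeffs pCons.IH)
  then show ?case by simp
qed simp

lemma coprime_const_poly: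
  fixes d :: "'a::{idom_divide, algebraic_semidom}" and G :: "'a poly"
  assumes "d \<noteq> 0" "is_unit (coeff G i)"
  shows "coprime [:d:] G"
proof (rule coprimeI)
  fix c assume "c dvd [:d:]" "c dvd G"
  have "degree c = 0"
    using dvd_imp_degree_le[OF \<open>c dvd [:d:]\<close>] assms(1) by simp
  then obtain c0 where c: "c = [:c0:]"
    by (metis degree_0_id)
  then have "c0 dvd coeff G i"
    using \<open>c dvd G\<close> by (simp add: const_poly_dvd_iff)
  then show "is_unit c"
    using assms(2) c dvd_unit_imp_unit by (auto simp: is_unit_const_poly_iff)
qed

lemma coprime_if_coprime_poly_swap:
  assumes "coprime (poly_swap D) (poly_swap G)"
  shows "coprime D G"
proof (rule coprimeI)
  fix c assume "c dvd D" "c dvd G"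
  then have "poly_swap c dvd poly_swap D" "poly_swap c dvd poly_swap G"
    by (metis dvd_def poly_swap_mult)+
  then have "is_unit (poly_swap c)"
    using assms coprime_common_divisor by blast
  then show "is_unit c"
    by (metis dvd_def poly_swap_1 poly_swap_mult poly_swap_poly_swap)
qed

definition modulus :: "nat \<Rightarrow> bipoly" where
  "modulus n = (1 - A_pol * Q_pol ^ n) * (A_pol - Q_pol ^ n)"

lemma coprime_modulus:
  fixes D :: bipoly
  assumes "n \<noteq> 0" "d \<noteq> 0" "D = [:d:] \<or> poly_swap D = [:d:]"
  shows "coprime D (modulus n)"
  using assms(3)
proof
  assume D: "D = [:d:]"
  have "Q_pol ^ n = monom 1 n"
    by (simp add: Q_pol_def monom_altdef)
  then have "coprime [:d:] (1 - A_pol * Q_pol ^ n)" "coprime [:d:] (A_pol - Q_pol ^ n)"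
    using assms(1) coprime_const_poly[OF assms(2), of _ 0] coprime_const_poly[OF assms(2), of _ n]
    by (simp_all add: A_pol_def coeff_pCons split: nat.split)
  then show ?thesis
    unfolding D modulus_def by simp
next
  assume D: "poly_swap D = [:d:]"
  have "poly_swap (1 - A_pol * Q_pol ^ n) = 1 - Q_pol * A_pol ^ n"
       "poly_swap (A_pol - Q_pol ^ n) = Q_pol - A_pol ^ n"
    by (simp_all only: A_pol_def Q_pol_def poly_swap_diff poly_swap_mult poly_swap_power
        poly_swap_1 poly_swap_inner_var poly_swap_outer_var)
  moreover have "coprime [:d:] (1 - Q_pol * A_pol ^ n)" "coprime [:d:] (Q_pol - A_pol ^ n)"
    using assms(1) coprime_const_poly[OF assms(2), of _ 0] coprime_const_poly[OF assms(2), of _ 1]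
    by (simp_all add: A_pol_def Q_pol_def poly_const_pow)
  ultimately have "coprime (poly_swap D) (poly_swap (1 - A_pol * Q_pol ^ n))"
      "coprime (poly_swap D) (poly_swap (A_pol - Q_pol ^ n))"
    unfolding D by simp_all
  then show ?thesis
    unfolding modulus_def by (simp add: coprime_if_coprime_poly_swap)
qed

section \<open>Congruences modulo a polynomial\<close>

definition coprime_denom :: "bipoly \<Rightarrow> ratfun \<Rightarrow> bool" where
  "coprime_denom P X \<longleftrightarrow> (\<exists>C D. D \<noteq> 0 \<and> coprime D P \<and> X = to_fract C / to_fract D)"

lemma coprime_denom_to_fract: "coprime_denom P (to_fract C)"
  unfolding coprime_denom_def by (intro exI[of _ C] exI[of _ 1]) simp

lemma coprime_denom_inverse_to_fract:
  "D \<noteq> 0 \<Longrightarrow> coprime D P \<Longrightarrow> coprime_denom P (inverse (to_fract D))"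
  unfolding coprime_denom_def by (intro exI[of _ 1] exI[of _ D]) (simp add: divide_inverse)

lemma coprime_denom_one: "coprime_denom P 1"
  using coprime_denom_to_fract[of P 1] by simp

lemma coprime_denom_add:
  assumes "coprime_denom P X" "coprime_denom P Y"
  shows "coprime_denom P (X + Y)"
proof -
  obtain C1 D1 C2 D2 where "D1 \<noteq> 0" "coprime D1 P" "X = to_fract C1 / to_fract D1"
    "D2 \<noteq> 0" "coprime D2 P" "Y = to_fract C2 / to_fract D2"
    using assms unfolding coprime_denom_def by blast
  then show ?thesis
    unfolding coprime_denom_def
    by (intro exI[of _ "C1 * D2 + C2 * D1"] exI[of _ "D1 * D2"]) (simp add: field_simps)
qed

lemma coprime_denom_mult:
  assumes "coprime_denom P X" "coprime_denom P Y"
  shows "coprime_denom P (X * Y)"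
proof -
  obtain C1 D1 C2 D2 where "D1 \<noteq> 0" "coprime D1 P" "X = to_fract C1 / to_fract D1"
    "D2 \<noteq> 0" "coprime D2 P" "Y = to_fract C2 / to_fract D2"
    using assms unfolding coprime_denom_def by blast
  then show ?thesis
    unfolding coprime_denom_def
    by (intro exI[of _ "C1 * C2"] exI[of _ "D1 * D2"]) simp
qed

lemma coprime_denom_diff:
  assumes "coprime_denom P X" "coprime_denom P Y"
  shows "coprime_denom P (X - Y)"
  using coprime_denom_add[OF assms(1) coprime_denom_mult[OF coprime_denom_to_fract[of P "-1"] assms(2)]]
  by simp

lemma coprime_denom_prod:
  fixes k :: nat
  shows "(\<And>j. j < k \<Longrightarrow> coprime_denom P (f j)) \<Longrightarrow> coprime_denom P (\<Prod>j<k. f j)"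
  by (induction k) (simp_all add: coprime_denom_mult coprime_denom_one)

lemma coprime_denom_power: "coprime_denom P X \<Longrightarrow> coprime_denom P (X ^ k)"
  using coprime_denom_prod[of k P "\<lambda>_. X"] by simp

lemma rf_cong_iff: "rf_cong X Y P \<longleftrightarrow> (\<exists>Z. coprime_denom P Z \<and> X - Y = to_fract P * Z)"
  unfolding rf_cong_def coprime_denom_def by (auto simp flip: times_divide_eq_right)

lemma rf_cong_refl: "rf_cong X X P"
  unfolding rf_cong_iff using coprime_denom_to_fract[of P 0] by auto

lemma rf_cong_add:
  assumes "rf_cong X Y P" "rf_cong X' Y' P"
  shows "rf_cong (X + X') (Y + Y') P"
proof -
  obtain Z Z' where "coprime_denom P Z" "X - Y = to_fract P * Z"
    "coprime_denom P Z'" "X' - Y' = to_fract P * Z'"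
    using assms unfolding rf_cong_iff by blast
  then show ?thesis
    unfolding rf_cong_iff
    by (intro exI[of _ "Z + Z'"]) (simp add: coprime_denom_add algebra_simps)
qed

lemma rf_cong_mult:
  assumes "rf_cong X Y P" "rf_cong X' Y' P" "coprime_denom P X" "coprime_denom P Y'"
  shows "rf_cong (X * X') (Y * Y') P"
proof -
  obtain Z Z' where Z: "coprime_denom P Z" "X - Y = to_fract P * Z"
    and Z': "coprime_denom P Z'" "X' - Y' = to_fract P * Z'"
    using assms(1,2) unfolding rf_cong_iff by blast
  have "X * X' - Y * Y' = X * (X' - Y') + (X - Y) * Y'"
    by (simp add: algebra_simps)
  also have "\<dots> = to_fract P * (X * Z' + Z * Y')"
    unfolding Z(2) Z'(2) by (simp add: algebra_simps)
  finally show ?thesis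
    unfolding rf_cong_iff using assms(3,4) Z(1) Z'(1)
    by (intro exI[of _ "X * Z' + Z * Y'"]) (simp add: coprime_denom_add coprime_denom_mult)
qed

lemma rf_cong_sum:
  fixes k :: nat
  shows "(\<And>j. j < k \<Longrightarrow> rf_cong (f j) (g j) P) \<Longrightarrow> rf_cong (\<Sum>j<k. f j) (\<Sum>j<k. g j) P"
  by (induction k) (simp_all add: rf_cong_refl rf_cong_add)

lemma rf_cong_prod:
  fixes k :: nat
  assumes "\<And>j. j < k \<Longrightarrow> rf_cong (f j) (g j) P"
    "\<And>j. j < k \<Longrightarrow> coprime_denom P (f j)" "\<And>j. j < k \<Longrightarrow> coprime_denom P (g j)"
  shows "rf_cong (\<Prod>j<k. f j) (\<Prod>j<k. g j) P"
  using assms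
  by (induction k) (simp_all add: rf_cong_refl rf_cong_mult coprime_denom_prod)

section \<open>Specialising a to q^n\<close>

lemma to_fract_power: "to_fract (x ^ k) = to_fract x ^ k"
  by (induction k) simp_all

lemma one_minus_var_power_nonzero:
  assumes "k \<noteq> 0"
  shows "1 - [:0, 1:] ^ k \<noteq> (0 :: 'a::comm_ring_1 poly)"
proof -
  have "coeff (1 - [:0, 1:] ^ k) k = (-1 :: 'a)"
    using assms by (simp add: monom_altdef[of 1, simplified, symmetric])
  then show ?thesis by auto
qed

lemma coprime_denom_vars:
  assumes "n \<noteq> 0"
  shows "coprime_denom (modulus n) a_var" "coprime_denom (modulus n) q_var"
    "coprime_denom (modulus n) (inverse a_var)" "coprime_denom (modulus n) (inverse q_var)"
proof -
  show "coprime_denom (modulus n) a_var" "coprime_denom (modulus n) q_var"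
    by (simp_all add: a_var_def q_var_def coprime_denom_to_fract)
  show "coprime_denom (modulus n) (inverse a_var)"
    unfolding a_var_def using coprime_modulus[OF assms, of "[:0, 1:]" A_pol]
    by (intro coprime_denom_inverse_to_fract) (simp_all add: A_pol_def)
  show "coprime_denom (modulus n) (inverse q_var)"
    unfolding q_var_def using coprime_modulus[OF assms, of "[:0, 1:]" Q_pol]
    by (intro coprime_denom_inverse_to_fract) (simp_all add: A_pol_def Q_pol_def)
qed

lemma a_var_nonzero: "a_var \<noteq> 0"
  by (simp add: a_var_def A_pol_def)

lemma q_var_power_nonzero: "q_var ^ k \<noteq> 0"
  by (simp add: q_var_def Q_pol_def)

lemma one_minus_q_var_power: "1 - q_var ^ k = to_fract (1 - Q_pol ^ k)"
  by (simp add: q_var_def to_fract_power)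

lemma coprime_denom_inverse_q_pochhammer:
  assumes "n \<noteq> 0"
  shows "coprime_denom (modulus n) (inverse (qpochhammer (q_var ^ 2) (q_var ^ 2) k))"
proof -
  have "coprime_denom (modulus n) (inverse (1 - q_var ^ 2 * (q_var ^ 2) ^ j))" for j
  proof -
    have "q_var ^ 2 * (q_var ^ 2) ^ j = q_var ^ (2 * Suc j)"
      by (simp only: power_mult power_Suc)
    have swap: "poly_swap (1 - Q_pol ^ (2 * Suc j)) = [:1 - [:0, 1:] ^ (2 * Suc j):]"
      by (simp only: Q_pol_def poly_swap_diff poly_swap_1 poly_swap_power poly_swap_outer_var)
        (simp add: poly_const_pow one_pCons)
    have nz: "1 - [:0, 1:] ^ (2 * Suc j) \<noteq> (0 :: rat poly)"
      by (rule one_minus_var_power_nonzero) simp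
    have "1 - Q_pol ^ (2 * Suc j) \<noteq> 0"
      using swap nz by (metis pCons_eq_0_iff poly_swap_0)
    moreover have "coprime (1 - Q_pol ^ (2 * Suc j)) (modulus n)"
      using coprime_modulus[OF assms nz] swap by blast
    ultimately show ?thesis
      unfolding \<open>q_var ^ 2 * (q_var ^ 2) ^ j = q_var ^ (2 * Suc j)\<close> one_minus_q_var_power
      by (rule coprime_denom_inverse_to_fract)
  qed
  moreover have "inverse (qpochhammer (q_var ^ 2) (q_var ^ 2) k)
      = (\<Prod>j<k. inverse (1 - q_var ^ 2 * (q_var ^ 2) ^ j))"
    unfolding qpochhammer_def prod_inversef[symmetric] by (simp add: o_def)
  ultimately show ?thesis
    by (simp add: coprime_denom_prod)
qed

lemma diff_reciprocal_factors:
  fixes a b x :: "'a::field"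
  assumes "a \<noteq> 0" "b \<noteq> 0"
  shows "(1 - a * x) * (1 - x / a) - (1 - x / b) * (1 - b * x) = (1 - a * b) * (a - b) * (x / (a * b))"
  using assms by (simp add: field_simps)

lemma rf_cong_reciprocal_factors:
  assumes "n \<noteq> 0" "coprime_denom (modulus n) x"
  shows "rf_cong ((1 - a_var * x) * (1 - x / a_var)) ((1 - x / q_var ^ n) * (1 - q_var ^ n * x))
    (modulus n)"
proof -
  have "(1 - a_var * x) * (1 - x / a_var) - (1 - x / q_var ^ n) * (1 - q_var ^ n * x)
      = to_fract (modulus n) * (x * inverse a_var * inverse q_var ^ n)"
    using diff_reciprocal_factors[OF a_var_nonzero q_var_power_nonzero, of x n]
    by (simp add: modulus_def a_var_def q_var_def to_fract_power field_simps)
  moreover have "coprime_denom (modulus n) (x * inverse a_var * inverse q_var ^ n)"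
    using coprime_denom_vars[OF assms(1)] assms(2)
    by (simp add: coprime_denom_mult coprime_denom_power)
  ultimately show ?thesis
    unfolding rf_cong_iff by blast
qed

lemma qpoch_eq_qpochhammer: "qpoch = qpochhammer"
  by (simp add: fun_eq_iff qpoch_def qpochhammer_def)

lemma rf_cong_summand:
  assumes "n = Suc (2 * m)"
  shows "rf_cong
    (qpoch (a_var * q_var) (q_var ^ 2) k * qpoch (q_var / a_var) (q_var ^ 2) k
      / qpoch (q_var ^ 2) (q_var ^ 2) k ^ 2)
    (chu_term (q_var ^ 2) ((q_var ^ 2) ^ m) k) (modulus n)"
proof -
  define p x where "p = q_var ^ 2" and "x j = q_var * p ^ j" for j
  have n: "n \<noteq> 0"
    using assms by simp
  have cd_x: "coprime_denom (modulus n) (x j)" for j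
    unfolding x_def p_def using coprime_denom_vars[OF n]
    by (simp add: coprime_denom_mult coprime_denom_power)
  have qn: "q_var ^ n = q_var * p ^ m"
    by (simp add: assms p_def power_mult)
  have lhs: "qpoch (a_var * q_var) p k * qpoch (q_var / a_var) p k
      = (\<Prod>j<k. (1 - a_var * x j) * (1 - x j / a_var))"
    by (simp add: qpoch_def prod.distrib x_def mult_ac)
  have rhs: "qpochhammer (inverse (p ^ m)) p k * qpochhammer (p * p ^ m) p k
      = (\<Prod>j<k. (1 - x j / q_var ^ n) * (1 - q_var ^ n * x j))"
  proof -
    have "x j / q_var ^ n = inverse (p ^ m) * p ^ j" "q_var ^ n * x j = p * p ^ m * p ^ j" for j
      using q_var_power_nonzero[of 1] by (simp_all add: x_def qn p_def field_simps power2_eq_square)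
    then show ?thesis
      by (simp add: qpochhammer_def prod.distrib)
  qed
  have "rf_cong (\<Prod>j<k. (1 - a_var * x j) * (1 - x j / a_var))
      (\<Prod>j<k. (1 - x j / q_var ^ n) * (1 - q_var ^ n * x j)) (modulus n)"
    using rf_cong_reciprocal_factors[OF n cd_x] cd_x coprime_denom_one coprime_denom_vars[OF n]
    by (intro rf_cong_prod)
      (simp_all add: divide_inverse coprime_denom_diff coprime_denom_mult coprime_denom_power
        flip: power_inverse)
  then have "rf_cong ((\<Prod>j<k. (1 - a_var * x j) * (1 - x j / a_var)) * inverse (qpochhammer p p k) ^ 2)
      ((\<Prod>j<k. (1 - x j / q_var ^ n) * (1 - q_var ^ n * x j)) * inverse (qpochhammer p p k) ^ 2) (modulus n)"
    using cd_x coprime_denom_one coprime_denom_vars[OF n] coprime_denom_inverse_q_pochhammer[OF n, of k]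
    by (intro rf_cong_mult rf_cong_refl)
      (simp_all add: p_def divide_inverse coprime_denom_prod coprime_denom_diff coprime_denom_mult
        coprime_denom_power)
  then show ?thesis
    unfolding chu_term_def lhs[unfolded p_def] rhs[unfolded p_def]
    unfolding qpoch_eq_qpochhammer p_def
    by (simp add: divide_inverse power_inverse)
qed

lemma q_var_square_not_root_of_unity: "(q_var ^ 2) ^ Suc i \<noteq> 1"
proof -
  have "1 - (q_var ^ 2) ^ Suc i = to_fract (1 - [:0, 1:] ^ (2 * Suc i))"
    unfolding one_minus_q_var_power[of "2 * Suc i", unfolded Q_pol_def, symmetric]
    by (simp only: power_mult)
  moreover have "1 - [:0, 1:] ^ (2 * Suc i) \<noteq> (0 :: bipoly)"
    by (rule one_minus_var_power_nonzero) simp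
  ultimately show ?thesis
    by (metis right_minus_eq to_fract_eq_0_iff)
qed

lemma closed_form_as_q_power:
  assumes "n = Suc (2 * m)"
  shows "(-1) ^ m / (q_var ^ 2) ^ (m * (m + 1) div 2)
    = (-1) ^ ((n - 1) div 2) * q_var powi ((1 - int n ^ 2) div 4)"
proof -
  have "(1 - int n ^ 2) div 4 = - int (m * (m + 1))"
    using assms by (simp add: power2_eq_square algebra_simps)
  moreover have "(q_var ^ 2) ^ (m * (m + 1) div 2) = q_var ^ (m * (m + 1))"
    by (simp flip: power_mult)
  ultimately show ?thesis
    using assms by (simp only: power_int_minus power_int_of_nat) (simp add: divide_inverse)
qed

theorem theorem1p7:
  fixes n :: nat
  assumes "odd n"
  shows "rf_cong
    (\<Sum>k<n. qpoch (a_var * q_var) (q_var ^ 2) k * qpoch (q_var / a_var) (q_var ^ 2) k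
              / (qpoch (q_var ^ 2) (q_var ^ 2) k) ^ 2)
    ((-1) ^ ((n - 1) div 2) * q_var powi ((1 - int n ^ 2) div 4))
    ((1 - A_pol * Q_pol ^ n) * (A_pol - Q_pol ^ n))"
proof -
  obtain m where n: "n = Suc (2 * m)"
    using assms by (metis oddE Suc_eq_plus1)
  have "rf_cong
    (\<Sum>k<n. qpoch (a_var * q_var) (q_var ^ 2) k * qpoch (q_var / a_var) (q_var ^ 2) k
              / (qpoch (q_var ^ 2) (q_var ^ 2) k) ^ 2)
    (\<Sum>k<n. chu_term (q_var ^ 2) ((q_var ^ 2) ^ m) k) (modulus n)"
    by (intro rf_cong_sum rf_cong_summand[OF n])
  also have "(\<Sum>k<n. chu_term (q_var ^ 2) ((q_var ^ 2) ^ m) k)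
      = (-1) ^ m / (q_var ^ 2) ^ (m * (m + 1) div 2)"
    using q_var_power_nonzero q_var_square_not_root_of_unity n
    by (intro sum_chu_term_closed_form) auto
  also have "\<dots> = (-1) ^ ((n - 1) div 2) * q_var powi ((1 - int n ^ 2) div 4)"
    by (rule closed_form_as_q_power[OF n])
  finally show ?thesis
    unfolding modulus_def .
qed

end
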